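(* Let $a>0$ and let $f$ be a real-valued smooth function on an open interval containing $[-a,a]$. Suppose $f^{(n)}(t)\neq0$ for all integers $n\ge0$ and all $t\in[-a,a]$, and that there is a constant $M$ such that $\left|\frac{f^{(n+1)}(t)}{f^{(n)}(t)}\right|\le M$ for all $n\ge0$ and all $t\in[-a,a]$. Then the series $\hat f$ converges uniformly on $[-a,a]$ and $\hat f(t)=f(0)$ for all $t\in[-a,a]$.
   Context: For a smooth function $f$ on an interval containing the point $t$, $\hat f(t)$ denotes the series $\hat f(t):=\sum_{n=0}^{\infty}\frac{(-1)^n}{n!}\,t^n f^{(n)}(t)$; convergence of $\hat f$ refers to convergence of its partial sums, and $\hat f(t)$ also denotes the sum. *)

theory Defs
  imports "HOL-Analysis.Analysis"
begin

definition nth_deriv :: "nat \<Rightarrow> (real \<Rightarrow> real) \<Rightarrow> real \<Rightarrow> real" where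
  "nth_deriv n f = (deriv ^^ n) f"

definition smooth_on :: "real set \<Rightarrow> (real \<Rightarrow> real) \<Rightarrow> bool" where
  "smooth_on U f \<longleftrightarrow> (\<forall>n. \<forall>t\<in>U. (nth_deriv n f has_real_derivative nth_deriv (Suc n) f t) (at t))"

definition hat_term :: "(real \<Rightarrow> real) \<Rightarrow> nat \<Rightarrow> real \<Rightarrow> real" where
  "hat_term f n t = (-1) ^ n / fact n * t ^ n * nth_deriv n f t"

end

theory Submission
  imports Defs
begin

(* The ratio bound turns into the
   geometric estimate |f^(n)(t)| <= M^n |f(t)| <= C M^n on [-a,a], where C bounds
   |f| on the compact interval.  Hence every term t^n/n! f^(n)(s) with t, s in
   [-a,a] is dominated by the exponential-series term C (M a)^n / n!, which is
   summable.  This gives uniform convergence of hat f by the Weierstrass M-test.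
   For the value of the sum, Taylor's theorem with Lagrange remainder, expanded
   around t and evaluated at 0, shows that f(0) minus the N-th partial sum of
   hat f(t) is exactly (-t)^N/N! f^(N)(s) for some s between 0 and t; this
   remainder is again dominated by the majorant term and therefore tends to 0. *)

lemma nth_deriv_0 [simp]: "nth_deriv 0 f = f"
  by (simp add: nth_deriv_def)

lemma smooth_on_DERIV:
  assumes "smooth_on U f" and "t \<in> U"
  shows "DERIV (nth_deriv n f) t :> nth_deriv (Suc n) f t"
  using assms unfolding smooth_on_def by blast

lemma bounded_ratio_imp_geometric_bound:
  fixes x :: "nat \<Rightarrow> real"
  assumes nonzero: "\<And>n. x n \<noteq> 0" and ratio: "\<And>n. \<bar>x (Suc n) / x n\<bar> \<le> M"
  shows "\<bar>x n\<bar> \<le> M ^ n * \<bar>x 0\<bar>"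
proof (induction n)
  case 0
  then show ?case by simp
next
  case (Suc n)
  have M_nonneg: "0 \<le> M"
    using ratio[of 0] abs_ge_zero order_trans by blast
  have "\<bar>x (Suc n)\<bar> = \<bar>x (Suc n) / x n\<bar> * \<bar>x n\<bar>"
    using nonzero[of n] by (simp add: abs_divide)
  also have "\<dots> \<le> M * (M ^ n * \<bar>x 0\<bar>)"
    using ratio[of n] Suc.IH M_nonneg by (intro mult_mono) auto
  finally show ?case by simp
qed

lemma hat_term_at_0: "hat_term f n 0 = (if n = 0 then f 0 else 0)"
  by (simp add: hat_term_def)

(* Taylor's theorem around t, evaluated at 0: the N-th partial sum of hat f(t)
   differs from f(0) by a Lagrange remainder at a point s between 0 and t. *)
lemma hat_partial_sum_remainder:
  assumes smooth: "smooth_on U f" and interval: "is_interval U"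
    and "0 \<in> U" "t \<in> U" "N > 0"
  obtains s where "min 0 t \<le> s" "s \<le> max 0 t"
    and "f 0 = (\<Sum>n<N. hat_term f n t) + (-t) ^ N / fact N * nth_deriv N f s"
proof (cases "t = 0")
  case True
  then show ?thesis
    using that[of 0] \<open>N > 0\<close> by (simp add: hat_term_at_0)
next
  case False
  have between_in_U: "s \<in> U" if "min 0 t \<le> s" "s \<le> max 0 t" for s
  proof (cases "0 \<le> t")
    case True
    then show ?thesis
      using mem_is_interval_1_I[OF interval \<open>0 \<in> U\<close> \<open>t \<in> U\<close>] that by simp
  next
    case False
    then show ?thesis
      using mem_is_interval_1_I[OF interval \<open>t \<in> U\<close> \<open>0 \<in> U\<close>] that by simp
  qed
  have derivs: "\<forall>m s. m < N \<and> min 0 t \<le> s \<and> s \<le> max 0 t \<longrightarrow>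
      DERIV (nth_deriv m f) s :> nth_deriv (Suc m) f s"
    using between_in_U smooth_on_DERIV[OF smooth] by blast
  have "\<exists>s. (if 0 < t then 0 < s \<and> s < t else t < s \<and> s < 0) \<and>
      f 0 = (\<Sum>n<N. nth_deriv n f t / fact n * (0 - t) ^ n) + nth_deriv N f s / fact N * (0 - t) ^ N"
    by (rule Taylor[OF \<open>N > 0\<close> nth_deriv_0 derivs]) (use False in auto)
  then obtain s where s: "if 0 < t then 0 < s \<and> s < t else t < s \<and> s < 0"
    and taylor: "f 0 = (\<Sum>n<N. nth_deriv n f t / fact n * (0 - t) ^ n) + nth_deriv N f s / fact N * (0 - t) ^ N"
    by blast
  have between: "min 0 t \<le> s" "s \<le> max 0 t"
    using s by (auto split: if_splits)
  have to_hat: "nth_deriv n f t / fact n * (0 - t) ^ n = hat_term f n t" for n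
    by (simp add: hat_term_def power_minus')
  have "f 0 = (\<Sum>n<N. hat_term f n t) + (-t) ^ N / fact N * nth_deriv N f s"
    using taylor unfolding to_hat by (simp add: ac_simps)
  with between show ?thesis by (rule that)
qed

lemma term_le_exp_majorant:
  assumes bound: "\<And>n s. s \<in> {-a..a} \<Longrightarrow> \<bar>nth_deriv n f s\<bar> \<le> C * K ^ n"
    and "\<bar>t\<bar> \<le> a" and "s \<in> {-a..a}"
  shows "\<bar>t ^ n / fact n * nth_deriv n f s\<bar> \<le> C * (K * a) ^ n / fact n"
proof -
  have "\<bar>t ^ n / fact n * nth_deriv n f s\<bar> = \<bar>t\<bar> ^ n * \<bar>nth_deriv n f s\<bar> / fact n"
    by (simp add: abs_mult power_abs)
  also have "\<dots> \<le> a ^ n * (C * K ^ n) / fact n"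
    using bound[OF \<open>s \<in> {-a..a}\<close>, of n] \<open>\<bar>t\<bar> \<le> a\<close>
    by (intro divide_right_mono mult_mono power_mono) auto
  also have "\<dots> = C * (K * a) ^ n / fact n"
    by (simp add: power_mult_distrib)
  finally show ?thesis .
qed

lemma summable_exp_majorant: "summable (\<lambda>n. C * (K * a) ^ n / fact n :: real)"
  using summable_mult[OF summable_exp[of "K * a"], of C] by (simp add: field_simps)

lemma hat_uniformly_convergent:
  assumes bound: "\<And>n s. s \<in> {-a..a} \<Longrightarrow> \<bar>nth_deriv n f s\<bar> \<le> C * K ^ n"
  shows "uniformly_convergent_on {-a..a} (\<lambda>N t. \<Sum>n<N. hat_term f n t)"
proof (rule Weierstrass_m_test'[OF _ summable_exp_majorant])
  fix n and t :: real
  assume t: "t \<in> {-a..a}"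
  then have "\<bar>t\<bar> \<le> a" by auto
  then show "norm (hat_term f n t) \<le> C * (K * a) ^ n / fact n"
    using term_le_exp_majorant[OF bound _ t, of t n]
    by (simp add: hat_term_def abs_mult)
qed

(* Under the same bound, the Taylor remainder tends to 0, so hat f(t) = f(0). *)
lemma hat_sums_value_at_0:
  assumes smooth: "smooth_on U f" and interval: "is_interval U" and sub: "{-a..a} \<subseteq> U"
    and bound: "\<And>n s. s \<in> {-a..a} \<Longrightarrow> \<bar>nth_deriv n f s\<bar> \<le> C * K ^ n"
    and t: "t \<in> {-a..a}"
  shows "(\<lambda>n. hat_term f n t) sums f 0"
proof -
  have "0 \<in> U" "t \<in> U" using t sub by auto
  have remainder_small:
    "norm (f 0 - (\<Sum>n<N. hat_term f n t)) \<le> C * (K * a) ^ N / fact N" if "N > 0" for N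
  proof -
    obtain s where "min 0 t \<le> s" "s \<le> max 0 t"
      and taylor: "f 0 = (\<Sum>n<N. hat_term f n t) + (-t) ^ N / fact N * nth_deriv N f s"
      using hat_partial_sum_remainder[OF smooth interval \<open>0 \<in> U\<close> \<open>t \<in> U\<close> \<open>N > 0\<close>] .
    then have "s \<in> {-a..a}" using t by auto
    then show ?thesis
      using taylor term_le_exp_majorant[OF bound _ \<open>s \<in> {-a..a}\<close>, of "-t" N] t by auto
  qed
  have "eventually (\<lambda>N. norm (f 0 - (\<Sum>n<N. hat_term f n t)) \<le> C * (K * a) ^ N / fact N)
      sequentially"
    using eventually_gt_at_top[of 0] by eventually_elim (rule remainder_small)
  then have "(\<lambda>N. f 0 - (\<Sum>n<N. hat_term f n t)) \<longlonglongrightarrow> 0"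
    by (rule Lim_null_comparison[OF _ summable_LIMSEQ_zero[OF summable_exp_majorant]])
  from tendsto_diff[OF tendsto_const[of "f 0"] this]
  show ?thesis unfolding sums_def by simp
qed

theorem theorem4:
  fixes f :: "real \<Rightarrow> real" and a M :: real and U :: "real set"
  assumes "a > 0"
    and "open U" and "is_interval U" and "{-a..a} \<subseteq> U"
    and "smooth_on U f"
    and "\<And>n t. t \<in> {-a..a} \<Longrightarrow> nth_deriv n f t \<noteq> 0"
    and "\<And>n t. t \<in> {-a..a} \<Longrightarrow> \<bar>nth_deriv (Suc n) f t / nth_deriv n f t\<bar> \<le> M"
  shows "uniformly_convergent_on {-a..a} (\<lambda>N t. \<Sum>n<N. hat_term f n t)
       \<and> (\<forall>t\<in>{-a..a}. (\<lambda>n. hat_term f n t) sums f 0)"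
proof -
  have "continuous_on {-a..a} f"
    using smooth_on_DERIV[OF assms(5), of _ 0] assms(4)
    by (metis DERIV_isCont continuous_at_imp_continuous_on nth_deriv_0 subsetD)
  then have "bounded (f ` {-a..a})"
    by (intro compact_imp_bounded compact_continuous_image) auto
  then obtain C where "\<forall>t\<in>{-a..a}. \<bar>f t\<bar> \<le> C"
    unfolding bounded_iff by auto
  then have C: "\<And>t. t \<in> {-a..a} \<Longrightarrow> \<bar>f t\<bar> \<le> C" by blast
  have "\<bar>nth_deriv 1 f 0 / f 0\<bar> \<le> M"
    using assms(1) assms(7)[of 0 0] by simp
  then have M_nonneg: "0 \<le> M"
    by (rule order_trans[OF abs_ge_zero])
  have bound: "\<bar>nth_deriv n f t\<bar> \<le> C * M ^ n" if "t \<in> {-a..a}" for n t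
  proof -
    have "\<bar>nth_deriv n f t\<bar> \<le> M ^ n * \<bar>f t\<bar>"
      using bounded_ratio_imp_geometric_bound[of "\<lambda>n. nth_deriv n f t" M] assms(6,7) that
      by simp
    also have "\<dots> \<le> M ^ n * C"
      using C[OF that] M_nonneg by (intro mult_left_mono) auto
    finally show ?thesis by (simp add: mult.commute)
  qed
  show ?thesis
    using hat_uniformly_convergent[OF bound] hat_sums_value_at_0[OF assms(5,3,4) bound]
    by blast
qed

end
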